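(* Let $m,n\ge 1$ and let $H^X,H^Z\in\mathbb F_2^{m\times n}$ satisfy $H^X(H^Z)^{\mathsf T}=0$ over $\mathbb F_2$. For $i\in\{1,\dots,m\}$ and $j\in\{1,\dots,n\}$ put $\partial_i^X=\{j: H^X_{ij}=1\}$, $\partial_i^Z=\{j: H^Z_{ij}=1\}$, $\partial_j^X=\{i: H^X_{ij}=1\}$, $\partial_j^Z=\{i: H^Z_{ij}=1\}$. Fix syndromes $\boldsymbol s^X,\boldsymbol s^Z\in\mathbb F_2^m$ and, for each $j$, a local prior $Q_j:\mathbb F_2^2\to[0,\infty)$ (a probability distribution on $(x_j,z_j)$). Let $\mathbb F_4=\{0,1,\omega,\omega^2\}$ with $\omega^2=\omega+1$, let $\phi:\mathbb F_2^2\to\mathbb F_4$, $\phi(x,z)=x+\omega z$ (a bijection), write $\phi^{-1}(\alpha)=(x(\alpha),z(\alpha))$, and set $Q_j^\phi(\alpha)=Q_j(x(\alpha),z(\alpha))$. Define the joint binary posterior on $(\boldsymbol x,\boldsymbol z)\in\mathbb F_2^n\times\mathbb F_2^n$ $$P_2(\boldsymbol x,\boldsymbol z\mid \boldsymbol s^X,\boldsymbol s^Z)=\frac1{Z_2}\prod_{j=1}^n Q_j(x_j,z_j)\prod_{i=1}^m\mathbf 1\Big\{\textstyle\sum_{j'\in\partial_i^X} z_{j'}=s_i^Z\Big\}\prod_{i=1}^m\mathbf 1\Big\{\textstyle\sum_{j'\in\partial_i^Z} x_{j'}=s_i^X\Big\},$$ and the four-state posterior on $\boldsymbol\alpha\in\mathbb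 F_4^n$ $$P_4(\boldsymbol\alpha\mid \boldsymbol s^X,\boldsymbol s^Z)=\frac1{Z_4}\prod_{j=1}^n Q_j^\phi(\alpha_j)\prod_{i=1}^m\mathbf 1\Big\{\textstyle\sum_{j\in\partial_i^X} z(\alpha_j)=s_i^Z\Big\}\prod_{i=1}^m\mathbf 1\Big\{\textstyle\sum_{j\in\partial_i^Z} x(\alpha_j)=s_i^X\Big\},$$ where all sums in indicators are in $\mathbb F_2$ and $Z_2,Z_4$ are normalizing constants (assumed positive). Joint BP (sum-product on the first factorization): for iterations $\ell=0,1,2,\dots$, given check-to-variable messages $\widehat\nu^{(\ell)}_{i\to j}(z)$ ($i\in\partial^X_j$) and $\widehat\mu^{(\ell)}_{i\to j}(x)$ ($i\in\partial_j^Z$), define $$\nu^{(\ell)}_{j\to i}(z)\propto\sum_{x\in\mathbb F_2}Q_j(x,z)\prod_{k\in\partial_j^X\setminus\{i\}}\widehat\nu^{(\ell)}_{k\to j}(z)\prod_{k\in\partial_j^Z}\widehat\mu^{(\ell)}_{k\to j}(x),\quad i\in\partial^X_j,$$ $$\mu^{(\ell)}_{j\to i}(x)\propto\sum_{z\in\mathbb F_2}Q_j(x,z)\prod_{k\in\partial_j^X}\widehat\nu^{(\ell)}_{k\to j}(z)\prod_{k\in\partial_j^Z\setminus\{i\}}\widehat\mu^{(\ell)}_{k\to j}(x),\quad i\in\partial^Z_j,$$ $$\widehat\nu^{(\ell+1)}_{i\to j}(z)\propto\sum_{\substack{(z_b)_{b\in\partial_i^X\setminus\{j\}}\\ z+\sum_b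 z_b=s_i^Z}}\ \prod_{b\in\partial_i^X\setminus\{j\}}\nu^{(\ell)}_{b\to i}(z_b),\qquad \widehat\mu^{(\ell+1)}_{i\to j}(x)\propto\sum_{\substack{(x_b)_{b\in\partial_i^Z\setminus\{j\}}\\ x+\sum_b x_b=s_i^X}}\ \prod_{b\in\partial_i^Z\setminus\{j\}}\mu^{(\ell)}_{b\to i}(x_b),$$ and beliefs $b^{(\ell)}_{2,j}(x,z)\propto Q_j(x,z)\prod_{i\in\partial_j^X}\widehat\nu^{(\ell)}_{i\to j}(z)\prod_{i\in\partial_j^Z}\widehat\mu^{(\ell)}_{i\to j}(x)$. Four-state BP (sum-product on the second factorization): given $\widehat m^{X,(\ell)}_{i\to j}(\alpha)$ ($i\in\partial_j^X$) and $\widehat m^{Z,(\ell)}_{i\to j}(\alpha)$ ($i\in\partial^Z_j$), define $$m^{X,(\ell)}_{j\to i}(\alpha)\propto Q^\phi_j(\alpha)\prod_{k\in\partial_j^X\setminus\{i\}}\widehat m^{X,(\ell)}_{k\to j}(\alpha)\prod_{k\in\partial_j^Z}\widehat m^{Z,(\ell)}_{k\to j}(\alpha),\qquad m^{Z,(\ell)}_{j\to i}(\alpha)\propto Q^\phi_j(\alpha)\prod_{k\in\partial_j^X}\widehat m^{X,(\ell)}_{k\to j}(\alpha)\prod_{k\in\partial_j^Z\setminus\{i\}}\widehat m^{Z,(\ell)}_{k\to j}(\alpha),$$ $$\widehat m^{X,(\ell+1)}_{i\to j}(\alpha)\propto\sum_{\substack{(\alpha_b)_{b\in\partial_i^X\setminus\{j\}}\\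 z(\alpha)+\sum_b z(\alpha_b)=s_i^Z}}\ \prod_{b}m^{X,(\ell)}_{b\to i}(\alpha_b),\qquad \widehat m^{Z,(\ell+1)}_{i\to j}(\alpha)\propto\sum_{\substack{(\alpha_b)_{b\in\partial_i^Z\setminus\{j\}}\\ x(\alpha)+\sum_b x(\alpha_b)=s_i^X}}\ \prod_{b}m^{Z,(\ell)}_{b\to i}(\alpha_b),$$ and beliefs $b^{(\ell)}_{4,j}(\alpha)\propto Q_j^\phi(\alpha)\prod_{i\in\partial_j^X}\widehat m^{X,(\ell)}_{i\to j}(\alpha)\prod_{i\in\partial_j^Z}\widehat m^{Z,(\ell)}_{i\to j}(\alpha)$. Assume the two decoders are initialized compatibly, i.e. for all $j$, $x,z\in\mathbb F_2$: $\widehat m^{X,(0)}_{i\to j}(\phi(x,z))\propto\widehat\nu^{(0)}_{i\to j}(z)$ for $i\in\partial_j^X$ and $\widehat m^{Z,(0)}_{i\to j}(\phi(x,z))\propto\widehat\mu^{(0)}_{i\to j}(x)$ for $i\in\partial_j^Z$ (e.g. all initial check-to-variable messages uniform). Then: (1) For all $\boldsymbol x,\boldsymbol z\in\mathbb F_2^n$, $P_4(\phi(\boldsymbol x,\boldsymbol z)\mid\boldsymbol s^X,\boldsymbol s^Z)=P_2(\boldsymbol x,\boldsymbol z\mid\boldsymbol s^X,\boldsymbol s^Z)$, where $\phi(\boldsymbol x,\boldsymbol z)_j=\phi(x_j,z_j)$. (2) For every iteration $\ell$, every $j$ and all $x,z\in\mathbb F_2$: $\widehat m^{X,(\ell)}_{i\to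 j}(\phi(x,z))\propto\widehat\nu^{(\ell)}_{i\to j}(z)$ for $i\in\partial_j^X$, and $\widehat m^{Z,(\ell)}_{i\to j}(\phi(x,z))\propto\widehat\mu^{(\ell)}_{i\to j}(x)$ for $i\in\partial_j^Z$. (3) For every $\ell$: $\nu^{(\ell)}_{j\to i}(z)\propto\sum_{x\in\mathbb F_2}m^{X,(\ell)}_{j\to i}(\phi(x,z))$ for $i\in\partial_j^X$, and $\mu^{(\ell)}_{j\to i}(x)\propto\sum_{z\in\mathbb F_2}m^{Z,(\ell)}_{j\to i}(\phi(x,z))$ for $i\in\partial_j^Z$. (4) For every $\ell$, $j\in\{1,\dots,n\}$ and $(\xi,\zeta)\in\mathbb F_2^2$, the normalized beliefs satisfy $b^{(\ell)}_{4,j}(\phi(\xi,\zeta))=b^{(\ell)}_{2,j}(\xi,\zeta)$. (5) Consequently, fixing any tie-breaking order on $\mathbb F_2^2$ and the induced order on $\mathbb F_4$ via $\phi$, the hard decisions $\widehat\alpha^{(\ell)}_j=\arg\max_{\alpha\in\mathbb F_4}b^{(\ell)}_{4,j}(\alpha)$ and $(\widetilde x^{(\ell)}_j,\widetilde z^{(\ell)}_j)=\arg\max_{(x,z)\in\mathbb F_2^2}b^{(\ell)}_{2,j}(x,z)$ satisfy $\widehat\alpha^{(\ell)}_j=\phi(\widetilde x^{(\ell)}_j,\widetilde z^{(\ell)}_j)$.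
   Context: Messages are nonnegative functions on the alphabet of a single variable ($\mathbb F_2$ or $\mathbb F_4$), identified up to multiplication by a positive constant; the symbol $\propto$ means equality up to such a positive (edge-local) constant. Beliefs are normalized to probability distributions (they are assumed not identically zero). The hard-decision argmax ties are broken by the fixed common order. This describes CSS syndrome decoding: $x_j,z_j$ are the $X$- and $Z$-components of the Pauli error on qubit $j$, rows of $H^X$ constrain $\boldsymbol z$ via $H^X\boldsymbol z=\boldsymbol s^Z$ and rows of $H^Z$ constrain $\boldsymbol x$ via $H^Z\boldsymbol x=\boldsymbol s^X$. *)

theory Defs
  imports Complex_Main "HOL-Library.Z2" "HOL-Library.FuncSet"
begin

lemma UNIV_bit: "(UNIV :: bit set) = {0, 1}"
  by (auto intro: bit.exhaust)

instance bit :: finite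
  by standard (simp add: UNIV_bit)

datatype f4 = F0 | F1 | Fw | Fw2

lemma UNIV_f4: "(UNIV :: f4 set) = {F0, F1, Fw, Fw2}"
  by (auto intro: f4.exhaust)

instance f4 :: finite
  by standard (simp add: UNIV_f4)

fun f4_add :: "f4 \<Rightarrow> f4 \<Rightarrow> f4" where
  "f4_add F0 b = b"
| "f4_add a F0 = a"
| "f4_add F1 F1 = F0"
| "f4_add F1 Fw = Fw2"
| "f4_add F1 Fw2 = Fw"
| "f4_add Fw F1 = Fw2"
| "f4_add Fw Fw = F0"
| "f4_add Fw Fw2 = F1"
| "f4_add Fw2 F1 = Fw"
| "f4_add Fw2 Fw = F1"
| "f4_add Fw2 Fw2 = F0"

fun f4_mul :: "f4 \<Rightarrow> f4 \<Rightarrow> f4" where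
  "f4_mul F0 b = F0"
| "f4_mul a F0 = F0"
| "f4_mul F1 b = b"
| "f4_mul a F1 = a"
| "f4_mul Fw Fw = Fw2"
| "f4_mul Fw Fw2 = F1"
| "f4_mul Fw2 Fw = F1"
| "f4_mul Fw2 Fw2 = Fw"

definition f4_of_bit :: "bit \<Rightarrow> f4" where
  "f4_of_bit b = (if b = 1 then F1 else F0)"

definition phi :: "bit \<Rightarrow> bit \<Rightarrow> f4" where
  "phi x z = f4_add (f4_of_bit x) (f4_mul Fw (f4_of_bit z))"

definition phi_inv :: "f4 \<Rightarrow> bit \<times> bit" where
  "phi_inv = inv (\<lambda>(x, z). phi x z)"

definition xof :: "f4 \<Rightarrow> bit" where "xof a = fst (phi_inv a)"
definition zof :: "f4 \<Rightarrow> bit" where "zof a = snd (phi_inv a)"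

section \<open>Tanner graph neighbourhoods; vectors are nat-indexed, 0-based\<close>

definition row_supp :: "nat \<Rightarrow> (nat \<Rightarrow> nat \<Rightarrow> bit) \<Rightarrow> nat \<Rightarrow> nat set" where
  "row_supp n H i = {j. j < n \<and> H i j = 1}"

definition col_supp :: "nat \<Rightarrow> (nat \<Rightarrow> nat \<Rightarrow> bit) \<Rightarrow> nat \<Rightarrow> nat set" where
  "col_supp m H j = {i. i < m \<and> H i j = 1}"

text \<open>F2^n and F4^n as zero-extended functions on nat.\<close>
definition vecs2 :: "nat \<Rightarrow> (nat \<Rightarrow> bit) set" where
  "vecs2 n = {x. \<forall>j\<ge>n. x j = 0}"

definition vecs4 :: "nat \<Rightarrow> (nat \<Rightarrow> f4) set" where
  "vecs4 n = {a. \<forall>j\<ge>n. a j = F0}"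

definition phi_vec :: "nat \<Rightarrow> (nat \<Rightarrow> bit) \<Rightarrow> (nat \<Rightarrow> bit) \<Rightarrow> nat \<Rightarrow> f4" where
  "phi_vec n x z = (\<lambda>j. if j < n then phi (x j) (z j) else F0)"

definition weight2 :: "nat \<Rightarrow> nat \<Rightarrow> (nat \<Rightarrow> nat \<Rightarrow> bit) \<Rightarrow> (nat \<Rightarrow> nat \<Rightarrow> bit)
    \<Rightarrow> (nat \<Rightarrow> bit) \<Rightarrow> (nat \<Rightarrow> bit) \<Rightarrow> (nat \<Rightarrow> bit \<Rightarrow> bit \<Rightarrow> real)
    \<Rightarrow> (nat \<Rightarrow> bit) \<Rightarrow> (nat \<Rightarrow> bit) \<Rightarrow> real" where
  "weight2 m n HX HZ sX sZ Q x z =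
     (\<Prod>j<n. Q j (x j) (z j))
     * (\<Prod>i<m. of_bool ((\<Sum>j'\<in>row_supp n HX i. z j') = sZ i))
     * (\<Prod>i<m. of_bool ((\<Sum>j'\<in>row_supp n HZ i. x j') = sX i))"

definition Z2_const where
  "Z2_const m n HX HZ sX sZ Q =
     (\<Sum>x\<in>vecs2 n. \<Sum>z\<in>vecs2 n. weight2 m n HX HZ sX sZ Q x z)"

definition P2 where
  "P2 m n HX HZ sX sZ Q x z =
     weight2 m n HX HZ sX sZ Q x z / Z2_const m n HX HZ sX sZ Q"

definition Qphi :: "(nat \<Rightarrow> bit \<Rightarrow> bit \<Rightarrow> real) \<Rightarrow> nat \<Rightarrow> f4 \<Rightarrow> real" where
  "Qphi Q j a = Q j (xof a) (zof a)"

definition weight4 :: "nat \<Rightarrow> nat \<Rightarrow> (nat \<Rightarrow> nat \<Rightarrow> bit) \<Rightarrow> (nat \<Rightarrow> nat \<Rightarrow> bit)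
    \<Rightarrow> (nat \<Rightarrow> bit) \<Rightarrow> (nat \<Rightarrow> bit) \<Rightarrow> (nat \<Rightarrow> bit \<Rightarrow> bit \<Rightarrow> real)
    \<Rightarrow> (nat \<Rightarrow> f4) \<Rightarrow> real" where
  "weight4 m n HX HZ sX sZ Q a =
     (\<Prod>j<n. Qphi Q j (a j))
     * (\<Prod>i<m. of_bool ((\<Sum>j\<in>row_supp n HX i. zof (a j)) = sZ i))
     * (\<Prod>i<m. of_bool ((\<Sum>j\<in>row_supp n HZ i. xof (a j)) = sX i))"

definition Z4_const where
  "Z4_const m n HX HZ sX sZ Q = (\<Sum>a\<in>vecs4 n. weight4 m n HX HZ sX sZ Q a)"

definition P4 where
  "P4 m n HX HZ sX sZ Q a = weight4 m n HX HZ sX sZ Q a / Z4_const m n HX HZ sX sZ Q"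

definition propto :: "('a \<Rightarrow> real) \<Rightarrow> ('a \<Rightarrow> real) \<Rightarrow> bool" (infix "\<propto>" 50) where
  "f \<propto> g \<longleftrightarrow> (\<exists>c>0. \<forall>a. f a = c * g a)"

section \<open>Hard decision: argmax with ties broken by a fixed order (a list enumerating the alphabet)\<close>

definition argmax_ord :: "('a \<Rightarrow> real) \<Rightarrow> 'a list \<Rightarrow> 'a" where
  "argmax_ord f ord = hd (filter (\<lambda>a. f a = Max (f ` set ord)) ord)"

end

(*
  Since phi is a bijection from F2^2 onto F4 and every factor of the four-state model is the
  corresponding factor of the binary model read through phi^-1, the two posteriors coincide.
  For belief propagation the invariant is that a four-state message from an X-check depends on
  alpha only through z(alpha), and from a Z-check only through x(alpha), where it is
  proportional to the binary message. Then a four-state variable-to-check message is, up to a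
  constant, the binary local factor Q_j(x, z) * prod nuh(z) * prod muh(x) read through phi, and
  its marginal is the binary message. A four-state check update only constrains one component
  of each incoming message, so the sum over the other components factors through the product
  and yields the binary check update applied to the marginals, which restores the invariant.
  Beliefs are therefore proportional, hence equal after normalization, and so are the argmax
  decisions.
*)

theory Submission
  imports Defs
begin

lemma phi_simps [simp]: "phi 0 0 = F0" "phi 1 0 = F1" "phi 0 1 = Fw" "phi 1 1 = Fw2"
  by (simp_all add: phi_def f4_of_bit_def)

lemma all_bit: "(\<forall>x::bit. P x) \<longleftrightarrow> P 0 \<and> P 1"
  by (metis bit_not_zero_iff)

lemma bij_phi: "bij (\<lambda>(x, z). phi x z)"
proof (rule bijI)
  show "inj (\<lambda>(x, z). phi x z)"
    by (simp add: inj_def split_paired_All all_bit)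
  show "surj (\<lambda>(x, z). phi x z)"
    by (metis phi_simps case_prod_conv f4.exhaust surj_def)
qed

lemma phi_inv_phi [simp]: "phi_inv (phi x z) = (x, z)"
  using bij_is_inj[OF bij_phi] by (simp add: phi_inv_def inv_f_eq)

lemma xof_phi [simp]: "xof (phi x z) = x"
  and zof_phi [simp]: "zof (phi x z) = z"
  by (simp_all add: xof_def zof_def)

lemma phi_xof_zof [simp]: "phi (xof a) (zof a) = a"
proof -
  obtain x z where "a = phi x z"
    using bij_phi by (metis bij_pointE case_prod_beta)
  then show ?thesis by simp
qed

lemma sum_UNIV_bit: "(\<Sum>x\<in>UNIV. f x) = f (0::bit) + f 1"
  by (simp add: UNIV_bit)

lemma sum_UNIV_f4: "(\<Sum>a\<in>UNIV. g a) = (\<Sum>x\<in>UNIV. \<Sum>z\<in>UNIV. g (phi x z))"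
  by (simp add: UNIV_f4 sum_UNIV_bit algebra_simps)

lemma weight4_phi_vec:
  "weight4 m n HX HZ sX sZ Q (phi_vec n x z) = weight2 m n HX HZ sX sZ Q x z"
  by (simp add: weight4_def weight2_def Qphi_def phi_vec_def row_supp_def)

lemma bij_betw_phi_vec: "bij_betw (\<lambda>(x, z). phi_vec n x z) (vecs2 n \<times> vecs2 n) (vecs4 n)"
  by (rule bij_betw_byWitness[where f' = "\<lambda>a. (\<lambda>j. if j < n then xof (a j) else 0,
                                               \<lambda>j. if j < n then zof (a j) else 0)"])
    (auto simp: vecs2_def vecs4_def phi_vec_def fun_eq_iff)

lemma Z4_const_eq_Z2_const: "Z4_const m n HX HZ sX sZ Q = Z2_const m n HX HZ sX sZ Q"
proof -
  have "Z4_const m n HX HZ sX sZ Q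
      = (\<Sum>(x, z)\<in>vecs2 n \<times> vecs2 n. weight4 m n HX HZ sX sZ Q (phi_vec n x z))"
    unfolding Z4_const_def
    by (subst sum.reindex_bij_betw[OF bij_betw_phi_vec, symmetric]) (simp add: case_prod_beta')
  also have "\<dots> = Z2_const m n HX HZ sX sZ Q"
    by (simp add: Z2_const_def weight4_phi_vec sum.cartesian_product)
  finally show ?thesis .
qed

lemma P4_phi_vec: "P4 m n HX HZ sX sZ Q (phi_vec n x z) = P2 m n HX HZ sX sZ Q x z"
  by (simp add: P4_def P2_def weight4_phi_vec Z4_const_eq_Z2_const)

lemma proptoI: "c > 0 \<Longrightarrow> (\<And>a. f a = c * g a) \<Longrightarrow> f \<propto> g"
  unfolding propto_def by blast

lemma proptoE:
  assumes "f \<propto> g"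
  obtains c where "c > 0" "\<And>a. f a = c * g a"
  using assms unfolding propto_def by blast

lemma propto_refl: "f \<propto> f"
  by (rule proptoI[of 1]) simp_all

lemma propto_sym: "f \<propto> g \<Longrightarrow> g \<propto> f"
  by (erule proptoE, rule proptoI[of "1 / _"]) auto

lemma propto_trans [trans]: "f \<propto> g \<Longrightarrow> g \<propto> h \<Longrightarrow> f \<propto> h"
  by (elim proptoE, rule proptoI[of "_ * _"]) auto

lemma propto_compose: "f \<propto> g \<Longrightarrow> (\<lambda>a. f (h a)) \<propto> (\<lambda>a. g (h a))"
  by (erule proptoE, rule proptoI) auto

lemma propto_mult:
  "f \<propto> g \<Longrightarrow> f' \<propto> g' \<Longrightarrow> (\<lambda>a. f a * f' a) \<propto> (\<lambda>a. g a * g' a)"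
  by (elim proptoE, rule proptoI[of "_ * _"]) auto

lemma propto_prod:
  assumes "\<forall>k\<in>A. f k \<propto> g k"
  shows "(\<lambda>a. \<Prod>k\<in>A. f k a) \<propto> (\<lambda>a. \<Prod>k\<in>A. g k a)"
proof -
  obtain c where c: "\<forall>k\<in>A. c k > 0 \<and> (\<forall>a. f k a = c k * g k a)"
    using assms unfolding propto_def by metis
  show ?thesis
  proof (rule proptoI[of "prod c A"])
    show "prod c A > 0" using c by (simp add: prod_pos)
    show "(\<Prod>k\<in>A. f k a) = prod c A * (\<Prod>k\<in>A. g k a)" for a
      using c by (simp add: prod.distrib[symmetric])
  qed
qed

lemma propto_sum_if:
  "f \<propto> g \<Longrightarrow> (\<lambda>a. \<Sum>b\<in>B a. if P a b then f (h a b) else 0)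
     \<propto> (\<lambda>a. \<Sum>b\<in>B a. if P a b then g (h a b) else 0)"
  by (erule proptoE, rule proptoI) (auto simp: sum_distrib_left if_distrib cong: if_cong)

lemma propto_sum:
  "f \<propto> g \<Longrightarrow> (\<lambda>a. \<Sum>b\<in>B a. f (h a b)) \<propto> (\<lambda>a. \<Sum>b\<in>B a. g (h a b))"
  using propto_sum_if[where P = "\<lambda>_ _. True"] by simp

lemma propto_normalized_eq:
  assumes "f \<propto> g" "sum f A = 1" "sum g A = 1"
  shows "f = g"
proof -
  obtain c where "c > 0" and fg: "\<And>a. f a = c * g a" using assms(1) unfolding propto_def by blast
  have "1 = c" using assms(2,3) by (simp add: fg sum_distrib_left[symmetric])
  then show ?thesis by (simp add: fg fun_eq_iff)
qed

lemma sum_PiE_marginalize: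
  fixes u_of :: "'a \<Rightarrow> 'b::comm_monoid_add" and v_of :: "'a \<Rightarrow> 'c::finite"
    and mk :: "'b \<Rightarrow> 'c \<Rightarrow> 'a" and f :: "'i \<Rightarrow> 'a \<Rightarrow> 'r::comm_semiring_1"
  assumes "finite S"
    and mk_u_of_v_of: "\<And>a. mk (u_of a) (v_of a) = a"
    and u_of_mk: "\<And>u v. u_of (mk u v) = u" and v_of_mk: "\<And>u v. v_of (mk u v) = v"
  shows "(\<Sum>ab\<in>PiE S (\<lambda>_. UNIV). if P (\<Sum>b\<in>S. u_of (ab b)) then \<Prod>b\<in>S. f b (ab b) else 0)
       = (\<Sum>ub\<in>PiE S (\<lambda>_. UNIV).
            if P (\<Sum>b\<in>S. ub b) then \<Prod>b\<in>S. \<Sum>v\<in>UNIV. f b (mk (ub b) v) else 0)"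
    (is "?lhs = ?rhs")
proof -
  let ?U = "PiE S (\<lambda>_. UNIV :: 'b set)" and ?V = "PiE S (\<lambda>_. UNIV :: 'c set)"
  define join where "join = (\<lambda>(ub, vb). restrict (\<lambda>b. mk (ub b) (vb b)) S)"
  define split where "split = (\<lambda>ab. (restrict (u_of \<circ> ab) S, restrict (v_of \<circ> ab) S))"
  have "bij_betw join (?U \<times> ?V) (PiE S (\<lambda>_. UNIV))"
    by (rule bij_betw_byWitness[where f' = split])
      (auto simp: join_def split_def fun_eq_iff PiE_iff extensional_def
        mk_u_of_v_of u_of_mk v_of_mk)
  then have "?lhs = (\<Sum>(ub, vb)\<in>?U \<times> ?V.
      if P (\<Sum>b\<in>S. ub b) then \<Prod>b\<in>S. f b (mk (ub b) (vb b)) else 0)"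
    by (subst sum.reindex_bij_betw[symmetric])
      (auto simp: join_def u_of_mk PiE_iff intro!: sum.cong cong: if_cong)
  also have "\<dots> = ?rhs"
    unfolding sum.cartesian_product[symmetric]
    by (intro sum.cong refl) (simp add: prod_sum_PiE[OF \<open>finite S\<close>])
  finally show ?thesis .
qed

lemma finite_row_supp: "finite (row_supp n H i)"
  by (simp add: row_supp_def)

lemma check_update_propto_marginal:
  fixes u_of :: "'a \<Rightarrow> 'b::comm_monoid_add" and v_of :: "'a \<Rightarrow> 'c::finite"
    and mk :: "'b \<Rightarrow> 'c \<Rightarrow> 'a" and f :: "'i \<Rightarrow> 'a \<Rightarrow> real"
  assumes "finite S"
    and "\<And>a. mk (u_of a) (v_of a) = a" "\<And>u v. u_of (mk u v) = u" "\<And>u v. v_of (mk u v) = v"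
    and marginals: "\<forall>b\<in>S. g b \<propto> (\<lambda>u. \<Sum>v\<in>UNIV. f b (mk u v))"
    and F: "F \<propto> (\<lambda>a. \<Sum>ab\<in>PiE S (\<lambda>_. UNIV).
              if P (u_of a) (\<Sum>b\<in>S. u_of (ab b)) then \<Prod>b\<in>S. f b (ab b) else 0)"
    and G: "G \<propto> (\<lambda>u. \<Sum>ub\<in>PiE S (\<lambda>_. UNIV).
              if P u (\<Sum>b\<in>S. ub b) then \<Prod>b\<in>S. g b (ub b) else 0)"
  shows "F \<propto> (\<lambda>a. G (u_of a))"
proof -
  have "(\<lambda>ub. \<Prod>b\<in>S. \<Sum>v\<in>UNIV. f b (mk (ub b) v)) \<propto> (\<lambda>ub. \<Prod>b\<in>S. g b (ub b))"
    using marginals by (intro propto_prod ballI) (rule propto_compose, rule propto_sym, auto)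
  then have "(\<lambda>a. \<Sum>ub\<in>PiE S (\<lambda>_. UNIV).
              if P (u_of a) (\<Sum>b\<in>S. ub b) then \<Prod>b\<in>S. \<Sum>v\<in>UNIV. f b (mk (ub b) v) else 0)
      \<propto> (\<lambda>a. \<Sum>ub\<in>PiE S (\<lambda>_. UNIV).
              if P (u_of a) (\<Sum>b\<in>S. ub b) then \<Prod>b\<in>S. g b (ub b) else 0)"
    by (rule propto_sum_if)
  also have "\<dots> \<propto> (\<lambda>a. G (u_of a))"
    by (rule propto_compose[OF propto_sym[OF G]])
  finally show ?thesis
    using F by (simp add: sum_PiE_marginalize[OF assms(1-4)] propto_trans)
qed

lemma propto_phi_iff:
  "(\<lambda>(x, z). F (phi x z)) \<propto> (\<lambda>(x, z). G x z) \<longleftrightarrow> F \<propto> (\<lambda>a. G (xof a) (zof a))"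
proof
  show "F \<propto> (\<lambda>a. G (xof a) (zof a))" if "(\<lambda>(x, z). F (phi x z)) \<propto> (\<lambda>(x, z). G x z)"
    using propto_compose[OF that, of "\<lambda>a. (xof a, zof a)"] by simp
  show "(\<lambda>(x, z). F (phi x z)) \<propto> (\<lambda>(x, z). G x z)" if "F \<propto> (\<lambda>a. G (xof a) (zof a))"
    using propto_compose[OF that, of "\<lambda>(x, z). phi x z"] by (simp add: case_prod_beta')
qed

lemma argmax_ord_map:
  assumes "\<And>p. f (h p) = (g p :: real)" "ord \<noteq> []"
  shows "argmax_ord f (map h ord) = h (argmax_ord g ord)"
proof -
  let ?M = "Max (g ` set ord)"
  have "f ` set (map h ord) = g ` set ord" using assms(1) by (auto simp: image_image)
  moreover have "filter (\<lambda>a. f a = ?M) (map h ord) = map h (filter (\<lambda>p. g p = ?M) ord)"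
    using assms(1) by (simp add: filter_map o_def)
  moreover have "filter (\<lambda>p. g p = ?M) ord \<noteq> []"
    using Max_in[of "g ` set ord"] assms(2) by (fastforce simp: filter_empty_conv)
  ultimately show ?thesis unfolding argmax_ord_def by (simp add: hd_map)
qed

locale css_bp_decoders =
  fixes m n :: nat
    and HX HZ :: "nat \<Rightarrow> nat \<Rightarrow> bit"
    and sX sZ :: "nat \<Rightarrow> bit"
    and Q :: "nat \<Rightarrow> bit \<Rightarrow> bit \<Rightarrow> real"
    and nuh muh nu mu :: "nat \<Rightarrow> nat \<Rightarrow> nat \<Rightarrow> bit \<Rightarrow> real"
    and b2 :: "nat \<Rightarrow> nat \<Rightarrow> bit \<Rightarrow> bit \<Rightarrow> real"
    and mXh mZh mX mZ :: "nat \<Rightarrow> nat \<Rightarrow> nat \<Rightarrow> f4 \<Rightarrow> real"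
    and b4 :: "nat \<Rightarrow> nat \<Rightarrow> f4 \<Rightarrow> real"
  assumes nu_upd: "\<forall>l. \<forall>j<n. \<forall>i\<in>col_supp m HX j.
        nu l j i \<propto> (\<lambda>z. \<Sum>x\<in>UNIV. Q j x z
            * (\<Prod>k\<in>col_supp m HX j - {i}. nuh l k j z)
            * (\<Prod>k\<in>col_supp m HZ j. muh l k j x))"
    and mu_upd: "\<forall>l. \<forall>j<n. \<forall>i\<in>col_supp m HZ j.
        mu l j i \<propto> (\<lambda>x. \<Sum>z\<in>UNIV. Q j x z
            * (\<Prod>k\<in>col_supp m HX j. nuh l k j z)
            * (\<Prod>k\<in>col_supp m HZ j - {i}. muh l k j x))"
    and nuh_upd: "\<forall>l. \<forall>i<m. \<forall>j\<in>row_supp n HX i.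
        nuh (Suc l) i j \<propto> (\<lambda>z. \<Sum>zb\<in>PiE (row_supp n HX i - {j}) (\<lambda>_. UNIV :: bit set).
            if z + (\<Sum>b\<in>row_supp n HX i - {j}. zb b) = sZ i
            then (\<Prod>b\<in>row_supp n HX i - {j}. nu l b i (zb b)) else 0)"
    and muh_upd: "\<forall>l. \<forall>i<m. \<forall>j\<in>row_supp n HZ i.
        muh (Suc l) i j \<propto> (\<lambda>x. \<Sum>xb\<in>PiE (row_supp n HZ i - {j}) (\<lambda>_. UNIV :: bit set).
            if x + (\<Sum>b\<in>row_supp n HZ i - {j}. xb b) = sX i
            then (\<Prod>b\<in>row_supp n HZ i - {j}. mu l b i (xb b)) else 0)"
    and b2_normalized: "\<forall>l. \<forall>j<n.
        (\<lambda>(x, z). b2 l j x z) \<propto> (\<lambda>(x, z). Q j x z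
            * (\<Prod>i\<in>col_supp m HX j. nuh l i j z)
            * (\<Prod>i\<in>col_supp m HZ j. muh l i j x))
        \<and> (\<Sum>x\<in>UNIV. \<Sum>z\<in>UNIV. b2 l j x z) = 1"
    and mX_upd: "\<forall>l. \<forall>j<n. \<forall>i\<in>col_supp m HX j.
        mX l j i \<propto> (\<lambda>a. Qphi Q j a
            * (\<Prod>k\<in>col_supp m HX j - {i}. mXh l k j a)
            * (\<Prod>k\<in>col_supp m HZ j. mZh l k j a))"
    and mZ_upd: "\<forall>l. \<forall>j<n. \<forall>i\<in>col_supp m HZ j.
        mZ l j i \<propto> (\<lambda>a. Qphi Q j a
            * (\<Prod>k\<in>col_supp m HX j. mXh l k j a)
            * (\<Prod>k\<in>col_supp m HZ j - {i}. mZh l k j a))"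
    and mXh_upd: "\<forall>l. \<forall>i<m. \<forall>j\<in>row_supp n HX i.
        mXh (Suc l) i j \<propto> (\<lambda>a. \<Sum>ab\<in>PiE (row_supp n HX i - {j}) (\<lambda>_. UNIV :: f4 set).
            if zof a + (\<Sum>b\<in>row_supp n HX i - {j}. zof (ab b)) = sZ i
            then (\<Prod>b\<in>row_supp n HX i - {j}. mX l b i (ab b)) else 0)"
    and mZh_upd: "\<forall>l. \<forall>i<m. \<forall>j\<in>row_supp n HZ i.
        mZh (Suc l) i j \<propto> (\<lambda>a. \<Sum>ab\<in>PiE (row_supp n HZ i - {j}) (\<lambda>_. UNIV :: f4 set).
            if xof a + (\<Sum>b\<in>row_supp n HZ i - {j}. xof (ab b)) = sX i
            then (\<Prod>b\<in>row_supp n HZ i - {j}. mZ l b i (ab b)) else 0)"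
    and b4_normalized: "\<forall>l. \<forall>j<n.
        b4 l j \<propto> (\<lambda>a. Qphi Q j a
            * (\<Prod>i\<in>col_supp m HX j. mXh l i j a)
            * (\<Prod>i\<in>col_supp m HZ j. mZh l i j a))
        \<and> (\<Sum>a\<in>UNIV. b4 l j a) = 1"
    and init_X: "\<forall>j<n. \<forall>i\<in>col_supp m HX j.
        (\<lambda>(x, z). mXh 0 i j (phi x z)) \<propto> (\<lambda>(x, z). nuh 0 i j z)"
    and init_Z: "\<forall>j<n. \<forall>i\<in>col_supp m HZ j.
        (\<lambda>(x, z). mZh 0 i j (phi x z)) \<propto> (\<lambda>(x, z). muh 0 i j x)"
begin

definition check_msgs_agree :: "nat \<Rightarrow> bool" where
  "check_msgs_agree l \<longleftrightarrow> (\<forall>j<n.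
      (\<forall>i\<in>col_supp m HX j. (\<lambda>(x, z). mXh l i j (phi x z)) \<propto> (\<lambda>(x, z). nuh l i j z))
    \<and> (\<forall>i\<in>col_supp m HZ j. (\<lambda>(x, z). mZh l i j (phi x z)) \<propto> (\<lambda>(x, z). muh l i j x)))"

definition var_msgs_agree :: "nat \<Rightarrow> bool" where
  "var_msgs_agree l \<longleftrightarrow> (\<forall>j<n.
      (\<forall>i\<in>col_supp m HX j. nu l j i \<propto> (\<lambda>z. \<Sum>x\<in>UNIV. mX l j i (phi x z)))
    \<and> (\<forall>i\<in>col_supp m HZ j. mu l j i \<propto> (\<lambda>x. \<Sum>z\<in>UNIV. mZ l j i (phi x z))))"

lemma check_msgs_agree_iff:
  "check_msgs_agree l \<longleftrightarrow> (\<forall>j<n.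
      (\<forall>i\<in>col_supp m HX j. mXh l i j \<propto> (\<lambda>a. nuh l i j (zof a)))
    \<and> (\<forall>i\<in>col_supp m HZ j. mZh l i j \<propto> (\<lambda>a. muh l i j (xof a))))"
  unfolding check_msgs_agree_def by (simp add: propto_phi_iff)

lemma incoming_messages_agree:
  assumes "check_msgs_agree l" "j < n" "A \<subseteq> col_supp m HX j" "B \<subseteq> col_supp m HZ j"
  shows "(\<lambda>a. Qphi Q j a * (\<Prod>k\<in>A. mXh l k j a) * (\<Prod>k\<in>B. mZh l k j a))
     \<propto> (\<lambda>a. Qphi Q j a * (\<Prod>k\<in>A. nuh l k j (zof a)) * (\<Prod>k\<in>B. muh l k j (xof a)))"
  using assms unfolding check_msgs_agree_iff
  by (intro propto_mult propto_refl propto_prod) auto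

lemma var_msgs_agreeI:
  assumes "check_msgs_agree l"
  shows "var_msgs_agree l"
  unfolding var_msgs_agree_def
proof (intro allI impI conjI ballI)
  fix j i assume j: "j < n"
  {
    assume i: "i \<in> col_supp m HX j"
    have mX_factor: "mX l j i \<propto> (\<lambda>a. Qphi Q j a
        * (\<Prod>k\<in>col_supp m HX j - {i}. nuh l k j (zof a)) * (\<Prod>k\<in>col_supp m HZ j. muh l k j (xof a)))"
      using mX_upd i j incoming_messages_agree[OF assms j] by (blast intro: propto_trans)
    have "(\<lambda>z. \<Sum>x\<in>UNIV. mX l j i (phi x z)) \<propto> (\<lambda>z. \<Sum>x\<in>UNIV. Q j x z
        * (\<Prod>k\<in>col_supp m HX j - {i}. nuh l k j z) * (\<Prod>k\<in>col_supp m HZ j. muh l k j x))"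
      using propto_sum[where h = "\<lambda>z x. phi x z" and B = "\<lambda>_. UNIV", OF mX_factor]
      by (simp add: Qphi_def)
    then show "nu l j i \<propto> (\<lambda>z. \<Sum>x\<in>UNIV. mX l j i (phi x z))"
      using nu_upd i j by (blast intro: propto_trans propto_sym)
  next
    assume i: "i \<in> col_supp m HZ j"
    have mZ_factor: "mZ l j i \<propto> (\<lambda>a. Qphi Q j a
        * (\<Prod>k\<in>col_supp m HX j. nuh l k j (zof a)) * (\<Prod>k\<in>col_supp m HZ j - {i}. muh l k j (xof a)))"
      using mZ_upd i j incoming_messages_agree[OF assms j] by (blast intro: propto_trans)
    have "(\<lambda>x. \<Sum>z\<in>UNIV. mZ l j i (phi x z)) \<propto> (\<lambda>x. \<Sum>z\<in>UNIV. Q j x z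
        * (\<Prod>k\<in>col_supp m HX j. nuh l k j z) * (\<Prod>k\<in>col_supp m HZ j - {i}. muh l k j x))"
      using propto_sum[where h = "\<lambda>x z. phi x z" and B = "\<lambda>_. UNIV", OF mZ_factor]
      by (simp add: Qphi_def)
    then show "mu l j i \<propto> (\<lambda>x. \<Sum>z\<in>UNIV. mZ l j i (phi x z))"
      using mu_upd i j by (blast intro: propto_trans propto_sym)
  }
qed

lemma check_msgs_agree_Suc:
  assumes "var_msgs_agree l"
  shows "check_msgs_agree (Suc l)"
  unfolding check_msgs_agree_iff
proof (intro allI impI conjI ballI)
  fix j i assume j: "j < n"
  {
    assume "i \<in> col_supp m HX j"
    then have i: "i < m" and ji: "j \<in> row_supp n HX i"
      using j by (auto simp: col_supp_def row_supp_def)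
    have "\<forall>b\<in>row_supp n HX i - {j}. nu l b i \<propto> (\<lambda>u. \<Sum>v\<in>UNIV. mX l b i (phi v u))"
      using assms i by (auto simp: var_msgs_agree_def row_supp_def col_supp_def)
    from check_update_propto_marginal[where mk = "\<lambda>u v. phi v u" and v_of = xof
        and P = "\<lambda>u t. u + t = sZ i", OF _ _ _ _ this mXh_upd[rule_format, OF i ji] nuh_upd[rule_format, OF i ji]]
    show "mXh (Suc l) i j \<propto> (\<lambda>a. nuh (Suc l) i j (zof a))"
      by (simp add: finite_row_supp)
  next
    assume "i \<in> col_supp m HZ j"
    then have i: "i < m" and ji: "j \<in> row_supp n HZ i"
      using j by (auto simp: col_supp_def row_supp_def)
    have "\<forall>b\<in>row_supp n HZ i - {j}. mu l b i \<propto> (\<lambda>u. \<Sum>v\<in>UNIV. mZ l b i (phi u v))"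
      using assms i by (auto simp: var_msgs_agree_def row_supp_def col_supp_def)
    from check_update_propto_marginal[where mk = phi and v_of = zof
        and P = "\<lambda>u t. u + t = sX i", OF _ _ _ _ this mZh_upd[rule_format, OF i ji] muh_upd[rule_format, OF i ji]]
    show "mZh (Suc l) i j \<propto> (\<lambda>a. muh (Suc l) i j (xof a))"
      by (simp add: finite_row_supp)
  }
qed

lemma check_msgs_agree: "check_msgs_agree l"
proof (induction l)
  case 0
  show ?case using init_X init_Z by (simp add: check_msgs_agree_def)
next
  case (Suc l)
  show ?case using Suc.IH by (intro check_msgs_agree_Suc var_msgs_agreeI)
qed

lemma var_msgs_agree: "var_msgs_agree l"
  using check_msgs_agree by (rule var_msgs_agreeI)

lemma beliefs_agree:
  assumes j: "j < n"
  shows "b4 l j (phi \<xi> \<zeta>) = b2 l j \<xi> \<zeta>"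
proof -
  let ?belief = "\<lambda>a. Qphi Q j a * (\<Prod>i\<in>col_supp m HX j. nuh l i j (zof a))
      * (\<Prod>i\<in>col_supp m HZ j. muh l i j (xof a))"
  have "b4 l j \<propto> ?belief"
    using b4_normalized incoming_messages_agree[OF check_msgs_agree j] j
    by (blast intro: propto_trans)
  moreover have "(\<lambda>a. b2 l j (xof a) (zof a)) \<propto> ?belief"
    using propto_compose[OF b2_normalized[rule_format, OF j, THEN conjunct1],
        where h = "\<lambda>a. (xof a, zof a)"]
    by (simp add: Qphi_def)
  ultimately have "b4 l j \<propto> (\<lambda>a. b2 l j (xof a) (zof a))"
    by (blast intro: propto_trans propto_sym)
  moreover have "(\<Sum>a\<in>UNIV. b4 l j a) = 1" "(\<Sum>a\<in>UNIV. b2 l j (xof a) (zof a)) = 1"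
    using b4_normalized b2_normalized j by (simp_all add: sum_UNIV_f4)
  ultimately have "b4 l j = (\<lambda>a. b2 l j (xof a) (zof a))"
    by (rule propto_normalized_eq)
  then show ?thesis by simp
qed

end

theorem theorem1:
  fixes m n :: nat
    and HX HZ :: "nat \<Rightarrow> nat \<Rightarrow> bit"
    and sX sZ :: "nat \<Rightarrow> bit"
    and Q :: "nat \<Rightarrow> bit \<Rightarrow> bit \<Rightarrow> real"
    \<comment> \<open>joint binary BP: check-to-variable (l, i, j, value) and variable-to-check (l, j, i, value)\<close>
    and nuh muh :: "nat \<Rightarrow> nat \<Rightarrow> nat \<Rightarrow> bit \<Rightarrow> real"
    and nu mu :: "nat \<Rightarrow> nat \<Rightarrow> nat \<Rightarrow> bit \<Rightarrow> real"
    and b2 :: "nat \<Rightarrow> nat \<Rightarrow> bit \<Rightarrow> bit \<Rightarrow> real"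
    \<comment> \<open>four-state BP\<close>
    and mXh mZh :: "nat \<Rightarrow> nat \<Rightarrow> nat \<Rightarrow> f4 \<Rightarrow> real"
    and mX mZ :: "nat \<Rightarrow> nat \<Rightarrow> nat \<Rightarrow> f4 \<Rightarrow> real"
    and b4 :: "nat \<Rightarrow> nat \<Rightarrow> f4 \<Rightarrow> real"
  assumes m_pos: "m \<ge> 1" and n_pos: "n \<ge> 1"
    and HX_HZ_orth: "\<forall>i<m. \<forall>i'<m. (\<Sum>j<n. HX i j * HZ i' j) = 0"
    and Q_nonneg: "\<forall>j<n. \<forall>x z. Q j x z \<ge> 0"
    and Q_prob: "\<forall>j<n. (\<Sum>x\<in>UNIV. \<Sum>z\<in>UNIV. Q j x z) = 1"
    and Z2_pos: "Z2_const m n HX HZ sX sZ Q > 0"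
    and Z4_pos: "Z4_const m n HX HZ sX sZ Q > 0"
    \<comment> \<open>messages are nonnegative\<close>
    and msg_nonneg2:
      "\<forall>l. \<forall>j<n. (\<forall>i\<in>col_supp m HX j. \<forall>v. nuh l i j v \<ge> 0 \<and> nu l j i v \<ge> 0)
                \<and> (\<forall>i\<in>col_supp m HZ j. \<forall>v. muh l i j v \<ge> 0 \<and> mu l j i v \<ge> 0)"
    and msg_nonneg4:
      "\<forall>l. \<forall>j<n. (\<forall>i\<in>col_supp m HX j. \<forall>a. mXh l i j a \<ge> 0 \<and> mX l j i a \<ge> 0)
                \<and> (\<forall>i\<in>col_supp m HZ j. \<forall>a. mZh l i j a \<ge> 0 \<and> mZ l j i a \<ge> 0)"
    \<comment> \<open>joint BP, variable-to-check updates\<close>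
    and nu_upd: "\<forall>l. \<forall>j<n. \<forall>i\<in>col_supp m HX j.
        nu l j i \<propto> (\<lambda>z. \<Sum>x\<in>UNIV. Q j x z
            * (\<Prod>k\<in>col_supp m HX j - {i}. nuh l k j z)
            * (\<Prod>k\<in>col_supp m HZ j. muh l k j x))"
    and mu_upd: "\<forall>l. \<forall>j<n. \<forall>i\<in>col_supp m HZ j.
        mu l j i \<propto> (\<lambda>x. \<Sum>z\<in>UNIV. Q j x z
            * (\<Prod>k\<in>col_supp m HX j. nuh l k j z)
            * (\<Prod>k\<in>col_supp m HZ j - {i}. muh l k j x))"
    \<comment> \<open>joint BP, check-to-variable updates\<close>
    and nuh_upd: "\<forall>l. \<forall>i<m. \<forall>j\<in>row_supp n HX i.
        nuh (Suc l) i j \<propto> (\<lambda>z. \<Sum>zb\<in>PiE (row_supp n HX i - {j}) (\<lambda>_. UNIV :: bit set).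
            if z + (\<Sum>b\<in>row_supp n HX i - {j}. zb b) = sZ i
            then (\<Prod>b\<in>row_supp n HX i - {j}. nu l b i (zb b)) else 0)"
    and muh_upd: "\<forall>l. \<forall>i<m. \<forall>j\<in>row_supp n HZ i.
        muh (Suc l) i j \<propto> (\<lambda>x. \<Sum>xb\<in>PiE (row_supp n HZ i - {j}) (\<lambda>_. UNIV :: bit set).
            if x + (\<Sum>b\<in>row_supp n HZ i - {j}. xb b) = sX i
            then (\<Prod>b\<in>row_supp n HZ i - {j}. mu l b i (xb b)) else 0)"
    \<comment> \<open>joint BP, normalized beliefs\<close>
    and b2_def: "\<forall>l. \<forall>j<n.
        (\<lambda>(x, z). b2 l j x z) \<propto> (\<lambda>(x, z). Q j x z
            * (\<Prod>i\<in>col_supp m HX j. nuh l i j z)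
            * (\<Prod>i\<in>col_supp m HZ j. muh l i j x))
        \<and> (\<Sum>x\<in>UNIV. \<Sum>z\<in>UNIV. b2 l j x z) = 1"
    \<comment> \<open>four-state BP, variable-to-check updates\<close>
    and mX_upd: "\<forall>l. \<forall>j<n. \<forall>i\<in>col_supp m HX j.
        mX l j i \<propto> (\<lambda>a. Qphi Q j a
            * (\<Prod>k\<in>col_supp m HX j - {i}. mXh l k j a)
            * (\<Prod>k\<in>col_supp m HZ j. mZh l k j a))"
    and mZ_upd: "\<forall>l. \<forall>j<n. \<forall>i\<in>col_supp m HZ j.
        mZ l j i \<propto> (\<lambda>a. Qphi Q j a
            * (\<Prod>k\<in>col_supp m HX j. mXh l k j a)
            * (\<Prod>k\<in>col_supp m HZ j - {i}. mZh l k j a))"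
    \<comment> \<open>four-state BP, check-to-variable updates\<close>
    and mXh_upd: "\<forall>l. \<forall>i<m. \<forall>j\<in>row_supp n HX i.
        mXh (Suc l) i j \<propto> (\<lambda>a. \<Sum>ab\<in>PiE (row_supp n HX i - {j}) (\<lambda>_. UNIV :: f4 set).
            if zof a + (\<Sum>b\<in>row_supp n HX i - {j}. zof (ab b)) = sZ i
            then (\<Prod>b\<in>row_supp n HX i - {j}. mX l b i (ab b)) else 0)"
    and mZh_upd: "\<forall>l. \<forall>i<m. \<forall>j\<in>row_supp n HZ i.
        mZh (Suc l) i j \<propto> (\<lambda>a. \<Sum>ab\<in>PiE (row_supp n HZ i - {j}) (\<lambda>_. UNIV :: f4 set).
            if xof a + (\<Sum>b\<in>row_supp n HZ i - {j}. xof (ab b)) = sX i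
            then (\<Prod>b\<in>row_supp n HZ i - {j}. mZ l b i (ab b)) else 0)"
    \<comment> \<open>four-state BP, normalized beliefs\<close>
    and b4_def: "\<forall>l. \<forall>j<n.
        b4 l j \<propto> (\<lambda>a. Qphi Q j a
            * (\<Prod>i\<in>col_supp m HX j. mXh l i j a)
            * (\<Prod>i\<in>col_supp m HZ j. mZh l i j a))
        \<and> (\<Sum>a\<in>UNIV. b4 l j a) = 1"
    \<comment> \<open>compatible initialization\<close>
    and init_X: "\<forall>j<n. \<forall>i\<in>col_supp m HX j.
        (\<lambda>(x, z). mXh 0 i j (phi x z)) \<propto> (\<lambda>(x, z). nuh 0 i j z)"
    and init_Z: "\<forall>j<n. \<forall>i\<in>col_supp m HZ j.
        (\<lambda>(x, z). mZh 0 i j (phi x z)) \<propto> (\<lambda>(x, z). muh 0 i j x)"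
  shows
    \<comment> \<open>(1) posteriors agree\<close>
    "(\<forall>x\<in>vecs2 n. \<forall>z\<in>vecs2 n.
        P4 m n HX HZ sX sZ Q (phi_vec n x z) = P2 m n HX HZ sX sZ Q x z)
     \<comment> \<open>(2) check-to-variable messages agree\<close>
     \<and> (\<forall>l. \<forall>j<n.
          (\<forall>i\<in>col_supp m HX j. (\<lambda>(x, z). mXh l i j (phi x z)) \<propto> (\<lambda>(x, z). nuh l i j z))
        \<and> (\<forall>i\<in>col_supp m HZ j. (\<lambda>(x, z). mZh l i j (phi x z)) \<propto> (\<lambda>(x, z). muh l i j x)))
     \<comment> \<open>(3) variable-to-check messages agree after marginalization\<close>
     \<and> (\<forall>l. \<forall>j<n.
          (\<forall>i\<in>col_supp m HX j. nu l j i \<propto> (\<lambda>z. \<Sum>x\<in>UNIV. mX l j i (phi x z)))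
        \<and> (\<forall>i\<in>col_supp m HZ j. mu l j i \<propto> (\<lambda>x. \<Sum>z\<in>UNIV. mZ l j i (phi x z))))
     \<comment> \<open>(4) normalized beliefs agree\<close>
     \<and> (\<forall>l. \<forall>j<n. \<forall>\<xi> \<zeta>. b4 l j (phi \<xi> \<zeta>) = b2 l j \<xi> \<zeta>)
     \<comment> \<open>(5) hard decisions agree for any tie-breaking order\<close>
     \<and> (\<forall>ord :: (bit \<times> bit) list. distinct ord \<and> set ord = UNIV \<longrightarrow>
          (\<forall>l. \<forall>j<n.
             argmax_ord (b4 l j) (map (\<lambda>(x, z). phi x z) ord)
             = (\<lambda>(x, z). phi x z) (argmax_ord (\<lambda>(x, z). b2 l j x z) ord)))"
proof -
  interpret css_bp_decoders m n HX HZ sX sZ Q nuh muh nu mu b2 mXh mZh mX mZ b4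
    using nu_upd mu_upd nuh_upd muh_upd b2_def mX_upd mZ_upd mXh_upd mZh_upd b4_def init_X init_Z
    by unfold_locales
  have hard_decisions: "argmax_ord (b4 l j) (map (\<lambda>(x, z). phi x z) ord)
      = (\<lambda>(x, z). phi x z) (argmax_ord (\<lambda>(x, z). b2 l j x z) ord)"
    if "set ord = UNIV" "j < n" for ord :: "(bit \<times> bit) list" and l j
    using that by (intro argmax_ord_map) (auto simp: beliefs_agree)
  show ?thesis
    using P4_phi_vec check_msgs_agree var_msgs_agree beliefs_agree hard_decisions
    unfolding check_msgs_agree_def var_msgs_agree_def by (intro conjI allI impI ballI) simp_all
qed

end
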